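(* Consider the differential equation \[ \frac{d}{dt}\left(\frac{\cos x}{1-\dot{x}}\right) = -\sin x, \qquad\text{equivalently}\qquad \frac{\cos x}{(1-\dot{x})^2}\,\ddot{x} - \frac{\sin x}{1-\dot{x}}\,\dot{x} = -\sin x, \] for a real function $x=x(t)$, with initial conditions $x(0)=a$, $\dot{x}(0)=b$, where $a,b\in\mathbb{R}$ satisfy \[ |a|<\pi/2,\qquad b\neq \tfrac12,\qquad b\neq 1,\qquad |a|+|b|>0 . \] Put $c=\dfrac{(2b-1)\cos^2 a}{(1-b)^2}$, $A=\sin 2a$ and $B=2b-1+\cos 2a$. Then the initial value problem has a smooth solution $x:\mathbb{R}\to\mathbb{R}$ given in explicit form. This solution satisfies \[ \tan x(t)=\frac{A\cos t+B\sin t}{2(1-b)+B\cos t-A\sin t} \] wherever the right-hand side is defined, and \[ \dot{x}(t)=\frac12+\frac{2(2b-1)\cos^2 a}{A^2+B^2+4(1-b)(B\cos t-A\sin t)+4(1-b)^2}. \] It satisfies the differential equation at every $t$ with $\cos x(t)\neq 0$ and $\dot{x}(t)\neq 1$. Moreover: 1. The solution $x$ is periodic if and only if $b<\tfrac12$. In that case its orbit in the phase plane (the $(x,\dot{x})$-plane) is a periodic orbit surrounding the origin, symmetric with respect to the $\dot{x}$-axis. 2. Suppose $b>\tfrac12$. Let $\{t_j\}_{j\in\mathbb{Z}}$ be the strictly increasing enumeration of the real roots of the trigonometric equation $B\cos t-A\sin t=2(b-1)$, indexed so that $t_0$ is the smallest positive root. Then: - for every $j\in\mathbb{Z}$, $x(t_j)$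 is an odd integer multiple of $\pi/2$ and $\dot{x}(t_j)=1$; - at each $t_j$, the differential equation and the energy relation \[ (\cos^2 x)\,\frac{2\dot{x}-1}{(1-\dot{x})^2}=c \] hold in the sense of the limit $t\to t_j$; - the orbit in the phase plane oscillates about the line $\dot{x}=1$ within the strip \[ \frac{\sqrt{1+c}}{\sqrt{1+c}+1}\le \dot{x}\le \frac{\sqrt{1+c}}{\sqrt{1+c}-1}, \] and it crosses the line $\dot{x}=1$ exactly at the times $t=t_j$, $j\in\mathbb{Z}$.
   Context: The phase plane is the $(x,\dot{x})$-plane. Points where $\cos x=0$ or $\dot{x}=1$ are singular points of the equation: there the coefficient of $\ddot{x}$ vanishes or becomes unbounded. The constant $c$ is the value of the "energy" $(\cos^2 x)(2\dot{x}-1)/(1-\dot{x})^2$ at $t=0$. This energy is conserved along solutions away from the singular points. *)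

theory Defs
  imports "HOL-Analysis.Analysis"
begin

definition smooth_real :: "(real \<Rightarrow> real) \<Rightarrow> bool" where
  "smooth_real f \<longleftrightarrow> (\<forall>n t. ((deriv ^^ n) f) differentiable (at t))"

definition periodic_real :: "(real \<Rightarrow> real) \<Rightarrow> bool" where
  "periodic_real f \<longleftrightarrow> (\<exists>T>0. \<forall>t. f (t + T) = f t)"

definition phase_orbit :: "(real \<Rightarrow> real) \<Rightarrow> (real \<times> real) set" where
  "phase_orbit f = (\<lambda>t. (f t, deriv f t)) ` UNIV"

definition ode_residual :: "(real \<Rightarrow> real) \<Rightarrow> real \<Rightarrow> real" where
  "ode_residual f t =
     cos (f t) / (1 - deriv f t)^2 * deriv (deriv f) t
     - sin (f t) / (1 - deriv f t) * deriv f t + sin (f t)"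

definition energy :: "(real \<Rightarrow> real) \<Rightarrow> real \<Rightarrow> real" where
  "energy f t = (cos (f t))^2 * (2 * deriv f t - 1) / (1 - deriv f t)^2"

end

theory Submission
  imports Defs
begin

text \<open>
  The point \<open>(M t, N t) = (2 (1 - b) + B cos t - A sin t, A cos t + B sin t)\<close> runs around the
  circle of radius \<open>R = \<surd>(A\<^sup>2 + B\<^sup>2)\<close> centred at \<open>(2 (1 - b), 0)\<close>, and its angular velocity
  \<open>(M N' - N M') / (M\<^sup>2 + N\<^sup>2)\<close> is the claimed formula for \<open>x'\<close>. Since \<open>(M 0, N 0)\<close> has argument
  \<open>a\<close>, the antiderivative \<open>x\<close> of this angular velocity with \<open>x 0 = a\<close> is a continuous argument
  of \<open>(M, N)\<close>: \<open>cos x = M / \<surd>D\<close> and \<open>sin x = N / \<surd>D\<close> with \<open>D = M\<^sup>2 + N\<^sup>2\<close>. Then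
  \<open>1 - x' = 2 (1 - b) M / D\<close>, so \<open>cos x / (1 - x') = \<surd>D / (2 (1 - b))\<close>, whose derivative is
  \<open>-sin x\<close>, and the energy equals \<open>c\<close>; the singular times are the zeros of \<open>M\<close>.

  For \<open>b < 1/2\<close> the circle lies in the half-plane \<open>M > 0\<close>, so \<open>x = arctan (N / M)\<close> is
  \<open>2\<pi>\<close>-periodic, and the phase orbit is the whole energy level, which bounds the region of
  lower energy containing the origin. For \<open>b > 1/2\<close> we have \<open>x' > 1/2\<close>, the zeros of \<open>M\<close>
  are simple since \<open>M' = -N \<noteq> 0\<close> there, and the strip comes from
  \<open>(R - s)\<^sup>2 \<le> D \<le> (R + s)\<^sup>2\<close> with \<open>s = 2 \<bar>1 - b\<bar>\<close>.
\<close>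

section \<open>Trigonometric polynomials\<close>

inductive_set trig_poly :: "(real \<Rightarrow> real) set" where
  trig_poly_const: "(\<lambda>t. c) \<in> trig_poly"
| trig_poly_cos: "cos \<in> trig_poly"
| trig_poly_sin: "sin \<in> trig_poly"
| trig_poly_add: "p \<in> trig_poly \<Longrightarrow> q \<in> trig_poly \<Longrightarrow> (\<lambda>t. p t + q t) \<in> trig_poly"
| trig_poly_mult: "p \<in> trig_poly \<Longrightarrow> q \<in> trig_poly \<Longrightarrow> (\<lambda>t. p t * q t) \<in> trig_poly"

lemma trig_poly_linear: "(\<lambda>t. c\<^sub>0 + c\<^sub>1 * cos t + c\<^sub>2 * sin t) \<in> trig_poly"
  by (intro trig_poly.intros)

lemma trig_poly_has_derivative:
  assumes "p \<in> trig_poly"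
  shows "\<exists>p'\<in>trig_poly. \<forall>t. (p has_real_derivative p' t) (at t)"
  using assms
proof induction
  case (trig_poly_const c)
  show ?case by (intro bexI[of _ "\<lambda>t. 0"] trig_poly.intros) auto
next
  case trig_poly_cos
  show ?case
    by (intro bexI[of _ "\<lambda>t. - 1 * sin t"] trig_poly.intros) (auto intro!: derivative_eq_intros)
next
  case trig_poly_sin
  show ?case by (intro bexI[of _ cos] trig_poly.intros) (auto intro!: derivative_eq_intros)
next
  case (trig_poly_add p q)
  then obtain p' q' where "p' \<in> trig_poly" "q' \<in> trig_poly"
    "\<forall>t. (p has_real_derivative p' t) (at t)" "\<forall>t. (q has_real_derivative q' t) (at t)"
    by blast
  then show ?case
    by (intro bexI[of _ "\<lambda>t. p' t + q' t"] trig_poly.intros) (auto intro!: derivative_eq_intros)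
next
  case (trig_poly_mult p q)
  then obtain p' q' where "p' \<in> trig_poly" "q' \<in> trig_poly"
    "\<forall>t. (p has_real_derivative p' t) (at t)" "\<forall>t. (q has_real_derivative q' t) (at t)"
    by blast
  with trig_poly_mult.hyps show ?case
    by (intro bexI[of _ "\<lambda>t. p' t * q t + p t * q' t"] trig_poly.intros)
       (auto intro!: derivative_eq_intros)
qed

lemma trig_poly_fraction_has_derivative:
  assumes p: "p \<in> trig_poly" and q: "q \<in> trig_poly" and q_ne: "\<And>t. q t \<noteq> 0"
  shows "\<exists>r\<in>trig_poly. \<forall>t.
    ((\<lambda>t. p t * inverse (q t) ^ n) has_real_derivative r t * inverse (q t) ^ Suc n) (at t)"
proof -
  obtain p' where p': "p' \<in> trig_poly" "\<And>t. (p has_real_derivative p' t) (at t)"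
    using trig_poly_has_derivative[OF p] by blast
  obtain q' where q': "q' \<in> trig_poly" "\<And>t. (q has_real_derivative q' t) (at t)"
    using trig_poly_has_derivative[OF q] by blast
  define r where "r t = p' t * q t + (- real n) * (p t * q' t)" for t
  have "r \<in> trig_poly"
    unfolding r_def by (intro trig_poly.intros p q p' q')
  moreover have "((\<lambda>t. p t * inverse (q t) ^ n) has_real_derivative r t * inverse (q t) ^ Suc n) (at t)"
    for t
  proof -
    have "((\<lambda>t. p t * inverse (q t) ^ n) has_real_derivative
        p' t * inverse (q t) ^ n
        + p t * (n * inverse (q t) ^ (n - 1) * - (inverse (q t) * q' t * inverse (q t)))) (at t)"
      using p'(2) q'(2) q_ne by (auto intro!: derivative_eq_intros)
    also have "p' t * inverse (q t) ^ n
        + p t * (n * inverse (q t) ^ (n - 1) * - (inverse (q t) * q' t * inverse (q t)))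
        = r t * inverse (q t) ^ Suc n"
      using q_ne[of t] by (cases n) (simp_all add: r_def field_simps)
    finally show ?thesis .
  qed
  ultimately show ?thesis by blast
qed

lemma smooth_real_trig_poly_fraction:
  assumes p: "p \<in> trig_poly" and q: "q \<in> trig_poly" and q_ne: "\<And>t. q t \<noteq> 0"
  shows "smooth_real (\<lambda>t. p t / q t)"
proof -
  have iterates: "\<exists>r\<in>trig_poly. \<exists>m. (deriv ^^ n) (\<lambda>t. p t / q t) = (\<lambda>t. r t * inverse (q t) ^ m)"
    for n
  proof (induction n)
    case 0
    show ?case using p by (intro bexI[of _ p] exI[of _ 1]) (auto simp: divide_inverse)
  next
    case (Suc n)
    then obtain r m where r: "r \<in> trig_poly"
      "(deriv ^^ n) (\<lambda>t. p t / q t) = (\<lambda>t. r t * inverse (q t) ^ m)"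
      by blast
    obtain r' where "r' \<in> trig_poly"
      "\<And>t. ((\<lambda>t. r t * inverse (q t) ^ m) has_real_derivative r' t * inverse (q t) ^ Suc m) (at t)"
      using trig_poly_fraction_has_derivative[OF r(1) q q_ne] by blast
    then show ?case
      using r(2) by (intro bexI[of _ r'] exI[of _ "Suc m"]) (auto intro!: ext DERIV_imp_deriv)
  qed
  show ?thesis
    unfolding smooth_real_def
  proof (intro allI)
    fix n t
    obtain r m where "r \<in> trig_poly" "(deriv ^^ n) (\<lambda>t. p t / q t) = (\<lambda>t. r t * inverse (q t) ^ m)"
      using iterates[of n] by blast
    then show "(deriv ^^ n) (\<lambda>t. p t / q t) differentiable (at t)"
      using trig_poly_fraction_has_derivative[OF _ q q_ne] real_differentiable_def by metis
  qed
qed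

lemma smooth_real_if_deriv_smooth:
  assumes "\<And>t. (f has_real_derivative f' t) (at t)" and "smooth_real f'"
  shows "smooth_real f"
  unfolding smooth_real_def
proof (intro allI)
  fix n t
  have "deriv f = f'"
    using assms(1) by (auto intro!: ext DERIV_imp_deriv)
  then show "(deriv ^^ n) f differentiable (at t)"
    using assms unfolding smooth_real_def real_differentiable_def
    by (cases n) (auto simp only: funpow_Suc_right comp_apply funpow_0)
qed

lemma continuous_has_antiderivative:
  fixes f :: "real \<Rightarrow> real"
  assumes "continuous_on UNIV f"
  shows "\<exists>F. \<forall>t. (F has_real_derivative f t) (at t)"
  using einterval_antiderivative[of "-\<infinity>" "\<infinity>" f] assms
  by (auto simp: has_real_derivative_iff_has_vector_derivative continuous_on_eq_continuous_at)

lemma ratio_const_if_same_logarithmic_derivative: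
  fixes f h l :: "real \<Rightarrow> real"
  assumes "\<And>t. (f has_real_derivative l t * f t) (at t)"
    and "\<And>t. (h has_real_derivative l t * h t) (at t)"
    and "\<And>t. h t \<noteq> 0"
  shows "f t / h t = f s / h s"
proof -
  have "((\<lambda>t. f t / h t) has_real_derivative 0) (at t)" for t
  proof -
    have "((\<lambda>t. f t / h t) has_real_derivative
        (l t * f t * h t - f t * (l t * h t)) / (h t * h t)) (at t)"
      using assms by (auto intro!: derivative_eq_intros)
    then show ?thesis by (simp add: algebra_simps)
  qed
  then show ?thesis by (intro DERIV_isconst_all) blast
qed

lemma continuous_avoiding_value_stays_below:
  fixes f :: "real \<Rightarrow> real"
  assumes "continuous_on UNIV f" and "\<And>t. f t \<noteq> y" and "f s < y"
  shows "f t < y"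
proof (rule ccontr)
  assume "\<not> f t < y"
  then have "y \<in> {f s..f t}" using assms(3) by simp
  moreover have "{f s..f t} \<subseteq> range f"
    using connected_continuous_image[OF assms(1) connected_UNIV] by (intro connected_contains_Icc) auto
  ultimately show False using assms(2) by blast
qed

lemma sign_change_at_simple_zero:
  fixes f :: "real \<Rightarrow> real"
  assumes "(f has_real_derivative d) (at t)" and "d \<noteq> 0" and "f t = 0"
  shows "\<exists>\<epsilon>>0. \<forall>s\<in>{t - \<epsilon><..<t}. \<forall>u\<in>{t<..<t + \<epsilon>}. f s * f u < 0"
proof -
  \<comment> \<open>\<open>d * f\<close> has positive derivative \<open>d\<^sup>2\<close>, so it increases through its zero at \<open>t\<close>\<close>
  have der: "((\<lambda>s. d * f s) has_real_derivative d * d) (at t)"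
    using assms(1) by (auto intro!: derivative_eq_intros)
  have pos: "d * d > 0" using assms(2) by (auto simp: zero_less_mult_iff)
  obtain \<epsilon>\<^sub>1 where "\<epsilon>\<^sub>1 > 0" and right: "\<forall>h>0. h < \<epsilon>\<^sub>1 \<longrightarrow> d * f t < d * f (t + h)"
    using DERIV_pos_inc_right[OF der pos] by blast
  obtain \<epsilon>\<^sub>2 where "\<epsilon>\<^sub>2 > 0" and left: "\<forall>h>0. h < \<epsilon>\<^sub>2 \<longrightarrow> d * f (t - h) < d * f t"
    using DERIV_pos_inc_left[OF der pos] by blast
  show ?thesis
  proof (intro exI[of _ "min \<epsilon>\<^sub>1 \<epsilon>\<^sub>2"] conjI ballI)
    show "min \<epsilon>\<^sub>1 \<epsilon>\<^sub>2 > 0" using \<open>\<epsilon>\<^sub>1 > 0\<close> \<open>\<epsilon>\<^sub>2 > 0\<close> by simp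
    fix s u assume "s \<in> {t - min \<epsilon>\<^sub>1 \<epsilon>\<^sub>2<..<t}" and "u \<in> {t<..<t + min \<epsilon>\<^sub>1 \<epsilon>\<^sub>2}"
    then have "d * f s < 0" "0 < d * f u"
      using left right assms(3) by (auto dest: spec[of _ "t - s"] spec[of _ "u - t"])
    then show "f s * f u < 0"
      by (auto simp: mult_less_0_iff zero_less_mult_iff)
  qed
qed

lemma eventually_nonzero_near_simple_zero:
  fixes f :: "real \<Rightarrow> real"
  assumes "(f has_real_derivative d) (at t)" and "d \<noteq> 0" and "f t = 0"
  shows "eventually (\<lambda>s. f s \<noteq> 0) (at t)"
proof -
  obtain \<epsilon> where "\<epsilon> > 0" and change: "\<forall>s\<in>{t - \<epsilon><..<t}. \<forall>u\<in>{t<..<t + \<epsilon>}. f s * f u < 0"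
    using sign_change_at_simple_zero[OF assms] by blast
  have "f s \<noteq> 0" if "s \<noteq> t" "dist s t < \<epsilon>" for s
  proof (cases "s < t")
    case True
    then have "f s * f (t + \<epsilon> / 2) < 0"
      using change that \<open>\<epsilon> > 0\<close> by (auto simp: dist_real_def)
    then show ?thesis by auto
  next
    case False
    then have "f (t - \<epsilon> / 2) * f s < 0"
      using change that \<open>\<epsilon> > 0\<close> by (auto simp: dist_real_def)
    then show ?thesis by auto
  qed
  then show ?thesis
    unfolding eventually_at using \<open>\<epsilon> > 0\<close> by blast
qed

lemma sinusoid_pair_surj:
  fixes A B E N :: real
  assumes "A\<^sup>2 + B\<^sup>2 > 0" and "E\<^sup>2 + N\<^sup>2 = A\<^sup>2 + B\<^sup>2"
  shows "\<exists>t. B * cos t - A * sin t = E \<and> A * cos t + B * sin t = N"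
proof -
  define R where "R = A\<^sup>2 + B\<^sup>2"
  have "R > 0" using assms(1) unfolding R_def .
  have "((B * E + A * N) / R)\<^sup>2 + ((B * N - A * E) / R)\<^sup>2 = 1"
  proof -
    have "(B * E + A * N)\<^sup>2 + (B * N - A * E)\<^sup>2 = R * (E\<^sup>2 + N\<^sup>2)"
      unfolding R_def by algebra
    also have "\<dots> = R\<^sup>2"
      using assms(2) unfolding R_def by (simp add: power2_eq_square)
    finally show ?thesis
      using \<open>R > 0\<close> by (simp add: power_divide add_divide_distrib[symmetric])
  qed
  then obtain t where cos_t: "cos t = (B * E + A * N) / R" and sin_t: "sin t = (B * N - A * E) / R"
    by (metis sincos_total_2pi)
  have "B * cos t - A * sin t = (B * (B * E + A * N) - A * (B * N - A * E)) / R"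
    unfolding cos_t sin_t using \<open>R > 0\<close> by (simp add: field_simps)
  also have "B * (B * E + A * N) - A * (B * N - A * E) = R * E"
    unfolding R_def by algebra
  finally have "B * cos t - A * sin t = E" using \<open>R > 0\<close> by simp
  moreover have "A * cos t + B * sin t = (A * (B * E + A * N) + B * (B * N - A * E)) / R"
    unfolding cos_t sin_t using \<open>R > 0\<close> by (simp add: field_simps)
  moreover have "A * (B * E + A * N) + B * (B * N - A * E) = R * N"
    unfolding R_def by algebra
  ultimately have "B * cos t - A * sin t = E \<and> A * cos t + B * sin t = N"
    using \<open>R > 0\<close> by simp
  then show ?thesis by blast
qed

lemma half_plus_difference_quotients:
  fixes R s :: real
  assumes "0 < s" and "s < R"
  shows "1 / 2 + (R\<^sup>2 - s\<^sup>2) / 2 / (R + s)\<^sup>2 = R / s / (R / s + 1)"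
    and "1 / 2 + (R\<^sup>2 - s\<^sup>2) / 2 / (R - s)\<^sup>2 = R / s / (R / s - 1)"
proof -
  have "R + s \<noteq> 0" "R - s \<noteq> 0" "s \<noteq> 0" using assms by auto
  have "R\<^sup>2 - s\<^sup>2 = (R - s) * (R + s)" by (simp add: power2_eq_square algebra_simps)
  then have "(R\<^sup>2 - s\<^sup>2) / 2 / (R + s)\<^sup>2 = (R - s) / (2 * (R + s))"
    "(R\<^sup>2 - s\<^sup>2) / 2 / (R - s)\<^sup>2 = (R + s) / (2 * (R - s))"
    using \<open>R + s \<noteq> 0\<close> \<open>R - s \<noteq> 0\<close> by (simp_all add: power2_eq_square)
  then show "1 / 2 + (R\<^sup>2 - s\<^sup>2) / 2 / (R + s)\<^sup>2 = R / s / (R / s + 1)"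
    and "1 / 2 + (R\<^sup>2 - s\<^sup>2) / 2 / (R - s)\<^sup>2 = R / s / (R / s - 1)"
    using \<open>R + s \<noteq> 0\<close> \<open>R - s \<noteq> 0\<close> \<open>s \<noteq> 0\<close> by (simp_all add: field_simps)
qed


section \<open>The explicit solution\<close>

locale explicit_solution =
  fixes a b :: real
  assumes a_bound: "\<bar>a\<bar> < pi / 2" and b_ne_half: "b \<noteq> 1 / 2" and b_ne_1: "b \<noteq> 1"
    and initial_not_origin: "\<bar>a\<bar> + \<bar>b\<bar> > 0"
begin

definition "A = sin (2 * a)"
definition "B = 2 * b - 1 + cos (2 * a)"
definition "K = 2 * (2 * b - 1) * (cos a)\<^sup>2"
definition "c = (2 * b - 1) * (cos a)\<^sup>2 / (1 - b)\<^sup>2"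

definition "E t = B * cos t - A * sin t"
definition "N t = A * cos t + B * sin t"
definition "M t = 2 * (1 - b) + E t"
definition "D t = (M t)\<^sup>2 + (N t)\<^sup>2"
definition "g t = 1 / 2 + K / D t"

lemma cos_a_pos: "cos a > 0"
  using a_bound by (intro cos_gt_zero_pi) auto

lemma K_ne_0: "K \<noteq> 0"
  using cos_a_pos b_ne_half by (simp add: K_def)

lemma c_eq: "c = K / (2 * (1 - b)\<^sup>2)"
proof -
  have "K = 2 * ((2 * b - 1) * (cos a)\<^sup>2)" by (simp add: K_def)
  then show ?thesis unfolding c_def by (simp only: mult_divide_mult_cancel_left)
qed

lemma A_B_sum_sq: "A\<^sup>2 + B\<^sup>2 = 4 * (1 - b)\<^sup>2 + 2 * K"
proof -
  have "(sin a)\<^sup>2 + (cos a)\<^sup>2 = 1" by simp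
  then show ?thesis
    unfolding A_def B_def K_def sin_double cos_double by algebra
qed

lemma A_B_sum_sq_pos: "A\<^sup>2 + B\<^sup>2 > 0"
proof (rule ccontr)
  assume "\<not> A\<^sup>2 + B\<^sup>2 > 0"
  then have "A = 0" "B = 0"
    by (simp_all add: sum_power2_gt_zero_iff)
  have "- pi < 2 * a" "2 * a < pi"
    using a_bound by (simp_all add: abs_less_iff)
  then have "2 * a = 0"
    using \<open>A = 0\<close> unfolding A_def by (rule sin_eq_0_pi)
  with \<open>B = 0\<close> have "a = 0" "b = 0" by (simp_all add: B_def)
  with initial_not_origin show False by simp
qed

lemma one_plus_c: "1 + c = (A\<^sup>2 + B\<^sup>2) / (4 * (1 - b)\<^sup>2)"
  using b_ne_1 by (simp add: A_B_sum_sq c_eq field_simps)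

lemma E_N_sum_sq: "(E t)\<^sup>2 + (N t)\<^sup>2 = A\<^sup>2 + B\<^sup>2"
proof -
  have "(sin t)\<^sup>2 + (cos t)\<^sup>2 = 1" by simp
  then show ?thesis unfolding E_def N_def by algebra
qed

lemma D_expand: "D t = A\<^sup>2 + B\<^sup>2 + 4 * (1 - b) * E t + 4 * (1 - b)\<^sup>2"
  using E_N_sum_sq[of t] by (simp add: D_def M_def power2_eq_square algebra_simps)

lemma D_pos: "D t > 0"
proof -
  have "D t \<noteq> 0"
  proof
    assume "D t = 0"
    then have "M t = 0" "N t = 0"
      by (auto simp: D_def sum_power2_eq_zero_iff)
    have "A\<^sup>2 + B\<^sup>2 = (M t - 2 * (1 - b))\<^sup>2 + (N t)\<^sup>2"
      using E_N_sum_sq[of t] by (simp add: M_def)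
    also have "\<dots> = 4 * (1 - b)\<^sup>2"
      using \<open>M t = 0\<close> \<open>N t = 0\<close> by (simp add: power2_eq_square algebra_simps)
    finally show False
      using A_B_sum_sq K_ne_0 by simp
  qed
  then show ?thesis by (simp add: D_def sum_power2_gt_zero_iff)
qed

lemma D_ne_0: "D t \<noteq> 0"
  using D_pos[of t] by simp

lemma g_times_D: "g t * D t = M t * E t + (N t)\<^sup>2"
proof -
  have "g t * D t = D t / 2 + K"
    using D_ne_0[of t] by (simp add: g_def field_simps)
  also have "\<dots> = M t * E t + (N t)\<^sup>2"
    using A_B_sum_sq D_expand[of t] E_N_sum_sq[of t] unfolding M_def by algebra
  finally show ?thesis .
qed

lemma one_minus_g: "1 - g t = 2 * (1 - b) * M t / D t"
proof -
  have "1 - g t = (D t - 2 * K) / (2 * D t)"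
    using D_ne_0[of t] by (simp add: g_def field_simps)
  also have "D t - 2 * K = 4 * (1 - b) * M t"
    using A_B_sum_sq D_expand[of t] unfolding M_def by algebra
  finally show ?thesis
    using D_ne_0[of t] by (simp add: field_simps)
qed

lemma M_0: "M 0 = 2 * (cos a)\<^sup>2"
  by (simp add: M_def E_def B_def cos_double_cos)

lemma N_0: "N 0 = 2 * sin a * cos a"
  by (simp add: N_def A_def sin_double)

lemma D_0: "D 0 = (2 * cos a)\<^sup>2"
proof -
  have "(sin a)\<^sup>2 + (cos a)\<^sup>2 = 1" by simp
  then show ?thesis unfolding D_def M_0 N_0 by algebra
qed

lemma g_0: "g 0 = b"
  using cos_a_pos by (simp add: g_def D_0 K_def field_simps)

lemma N_has_derivative: "(N has_real_derivative E t) (at t)"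
  unfolding N_def[abs_def] E_def by (auto intro!: derivative_eq_intros)

lemma M_has_derivative: "(M has_real_derivative - N t) (at t)"
  unfolding M_def[abs_def] E_def[abs_def] N_def by (auto intro!: derivative_eq_intros)

lemma D_has_derivative: "(D has_real_derivative - 4 * (1 - b) * N t) (at t)"
proof -
  have "(D has_real_derivative 2 * M t * (- N t) + 2 * N t * E t) (at t)"
    unfolding D_def[abs_def] by (auto intro!: derivative_eq_intros M_has_derivative N_has_derivative)
  then show ?thesis by (simp add: M_def algebra_simps)
qed

lemma continuous_g: "continuous_on UNIV g"
proof -
  have "continuous_on UNIV D"
    using D_has_derivative by (meson DERIV_isCont continuous_at_imp_continuous_on)
  then show ?thesis
    unfolding g_def[abs_def] by (auto intro!: continuous_intros D_ne_0)
qed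

definition "x = (SOME y. y 0 = a \<and> (\<forall>t. (y has_real_derivative g t) (at t)))"

lemma x_0: "x 0 = a" and x_has_derivative: "(x has_real_derivative g t) (at t)"
proof -
  obtain G where G: "\<And>t. (G has_real_derivative g t) (at t)"
    using continuous_has_antiderivative[OF continuous_g] by blast
  have "\<exists>y. y 0 = a \<and> (\<forall>t. (y has_real_derivative g t) (at t))"
    by (rule exI[of _ "\<lambda>t. a + G t - G 0"]) (auto intro!: derivative_eq_intros G)
  then have "x 0 = a \<and> (\<forall>t. (x has_real_derivative g t) (at t))"
    unfolding x_def by (rule someI_ex)
  then show "x 0 = a" "(x has_real_derivative g t) (at t)" by auto
qed

lemma deriv_x: "deriv x = g"
  using x_has_derivative by (auto intro!: ext DERIV_imp_deriv)

lemma sqrt_D_pos: "sqrt (D t) > 0"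
  using D_pos by simp

lemma sqrt_D_ne_0: "sqrt (D t) \<noteq> 0"
  using sqrt_D_pos[of t] by simp

lemma sqrt_D_has_derivative:
  "((\<lambda>t. sqrt (D t)) has_real_derivative (- 2 * (1 - b) * N t / D t) * sqrt (D t)) (at t)"
proof -
  have "((\<lambda>t. sqrt (D t)) has_real_derivative
      inverse (sqrt (D t)) / 2 * (- 4 * (1 - b) * N t)) (at t)"
    by (rule DERIV_chain2[OF DERIV_real_sqrt D_has_derivative]) (rule D_pos)
  moreover have "inverse r / 2 * (- 4 * u * n) = (- 2 * u * n / (r * r)) * r"
    if "r \<noteq> 0" for r u n :: real
    using that by (simp add: field_simps)
  from this[OF sqrt_D_ne_0, unfolded real_sqrt_mult_self abs_of_pos[OF D_pos]]
  have "inverse (sqrt (D t)) / 2 * (- 4 * (1 - b) * N t)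
      = (- 2 * (1 - b) * N t / D t) * sqrt (D t)" .
  ultimately show ?thesis by simp
qed

text \<open>In the frame rotated by the angle \<open>x\<close>, both components of \<open>(M, N)\<close> grow at the logarithmic
  rate of \<open>\<surd>D\<close>: this is exactly what the choice of the angular velocity \<open>g\<close> achieves.\<close>

lemma rotated_components_have_derivative:
  "((\<lambda>t. M t * cos (x t) + N t * sin (x t)) has_real_derivative
      (- 2 * (1 - b) * N t / D t) * (M t * cos (x t) + N t * sin (x t))) (at t)"
  "((\<lambda>t. N t * cos (x t) - M t * sin (x t)) has_real_derivative
      (- 2 * (1 - b) * N t / D t) * (N t * cos (x t) - M t * sin (x t))) (at t)"
proof -
  have gD: "g t * D t = M t * E t + (N t)\<^sup>2" by (rule g_times_D)
  have E: "E t = M t - 2 * (1 - b)" by (simp add: M_def)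
  have Dt: "D t = (M t)\<^sup>2 + (N t)\<^sup>2" by (simp add: D_def)
  have "D t \<noteq> 0" by (rule D_ne_0)
  have "((\<lambda>t. M t * cos (x t) + N t * sin (x t)) has_real_derivative
      - N t * cos (x t) + M t * (- sin (x t) * g t) + (E t * sin (x t) + N t * (cos (x t) * g t))) (at t)"
    by (auto intro!: derivative_eq_intros M_has_derivative N_has_derivative x_has_derivative)
  moreover have "- N t * cos (x t) + M t * (- sin (x t) * g t) + (E t * sin (x t) + N t * (cos (x t) * g t))
      = (- 2 * (1 - b) * N t / D t) * (M t * cos (x t) + N t * sin (x t))"
    using \<open>D t \<noteq> 0\<close> gD unfolding E Dt by (simp add: field_simps) algebra
  ultimately show "((\<lambda>t. M t * cos (x t) + N t * sin (x t)) has_real_derivative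
      (- 2 * (1 - b) * N t / D t) * (M t * cos (x t) + N t * sin (x t))) (at t)"
    by simp
  have "((\<lambda>t. N t * cos (x t) - M t * sin (x t)) has_real_derivative
      E t * cos (x t) + N t * (- sin (x t) * g t) - (- N t * sin (x t) + M t * (cos (x t) * g t))) (at t)"
    by (auto intro!: derivative_eq_intros M_has_derivative N_has_derivative x_has_derivative)
  moreover have "E t * cos (x t) + N t * (- sin (x t) * g t) - (- N t * sin (x t) + M t * (cos (x t) * g t))
      = (- 2 * (1 - b) * N t / D t) * (N t * cos (x t) - M t * sin (x t))"
    using \<open>D t \<noteq> 0\<close> gD unfolding E Dt by (simp add: field_simps) algebra
  ultimately show "((\<lambda>t. N t * cos (x t) - M t * sin (x t)) has_real_derivative
      (- 2 * (1 - b) * N t / D t) * (N t * cos (x t) - M t * sin (x t))) (at t)"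
    by simp
qed

lemma M_N_polar: "M t = sqrt (D t) * cos (x t)" "N t = sqrt (D t) * sin (x t)"
proof -
  have "sqrt (D 0) = 2 * cos a"
    unfolding D_0 real_sqrt_abs using cos_a_pos by simp
  moreover have "(sin a)\<^sup>2 + (cos a)\<^sup>2 = 1" by simp
  ultimately have p_0: "M 0 * cos (x 0) + N 0 * sin (x 0) = sqrt (D 0)"
    unfolding x_0 M_0 N_0 by algebra
  have q_0: "N 0 * cos (x 0) - M 0 * sin (x 0) = 0"
    unfolding x_0 M_0 N_0 by (simp add: power2_eq_square)
  have "(M t * cos (x t) + N t * sin (x t)) / sqrt (D t)
      = (M 0 * cos (x 0) + N 0 * sin (x 0)) / sqrt (D 0)"
    by (rule ratio_const_if_same_logarithmic_derivative[OF rotated_components_have_derivative(1)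
        sqrt_D_has_derivative sqrt_D_ne_0])
  also have "\<dots> = 1"
    unfolding p_0 using sqrt_D_ne_0[of 0] by simp
  finally have p: "M t * cos (x t) + N t * sin (x t) = sqrt (D t)"
    by simp
  have "(N t * cos (x t) - M t * sin (x t)) / sqrt (D t)
      = (N 0 * cos (x 0) - M 0 * sin (x 0)) / sqrt (D 0)"
    by (rule ratio_const_if_same_logarithmic_derivative[OF rotated_components_have_derivative(2)
        sqrt_D_has_derivative sqrt_D_ne_0])
  then have q: "N t * cos (x t) - M t * sin (x t) = 0"
    unfolding q_0 using sqrt_D_ne_0[of t] by simp
  have "cos (x t) * (M t * cos (x t) + N t * sin (x t)) - sin (x t) * (N t * cos (x t) - M t * sin (x t))
      = M t * ((sin (x t))\<^sup>2 + (cos (x t))\<^sup>2)"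
    "sin (x t) * (M t * cos (x t) + N t * sin (x t)) + cos (x t) * (N t * cos (x t) - M t * sin (x t))
      = N t * ((sin (x t))\<^sup>2 + (cos (x t))\<^sup>2)"
    by algebra+
  then show "M t = sqrt (D t) * cos (x t)" "N t = sqrt (D t) * sin (x t)"
    unfolding p q sin_cos_squared_add by (simp_all add: mult.commute)
qed

lemma cos_x: "cos (x t) = M t / sqrt (D t)" and sin_x: "sin (x t) = N t / sqrt (D t)"
  using M_N_polar[of t] sqrt_D_ne_0[of t] by simp_all

lemma cos_x_eq_0_iff: "cos (x t) = 0 \<longleftrightarrow> M t = 0"
  using sqrt_D_ne_0[of t] by (simp add: cos_x)

lemma g_eq_1_iff: "g t = 1 \<longleftrightarrow> M t = 0"
proof -
  have "g t = 1 \<longleftrightarrow> 1 - g t = 0" by auto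
  also have "\<dots> \<longleftrightarrow> M t = 0"
    unfolding one_minus_g using b_ne_1 D_ne_0[of t] by simp
  finally show ?thesis .
qed

lemma tan_x: "M t \<noteq> 0 \<Longrightarrow> tan (x t) = N t / M t"
  using sqrt_D_ne_0[of t] by (simp add: tan_def cos_x sin_x)

lemma continuous_x: "continuous_on UNIV x"
  using x_has_derivative by (meson DERIV_isCont continuous_at_imp_continuous_on)

lemma D_trig_poly: "D \<in> trig_poly"
proof -
  have "D = (\<lambda>t. (A\<^sup>2 + B\<^sup>2 + 4 * (1 - b)\<^sup>2) + 4 * (1 - b) * B * cos t + (- 4 * (1 - b) * A) * sin t)"
    by (auto intro!: ext simp: D_expand E_def algebra_simps)
  then show ?thesis using trig_poly_linear by simp
qed

lemma smooth_g: "smooth_real g"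
proof -
  have "(\<lambda>t. 1 / 2 * D t + K) \<in> trig_poly"
    using D_trig_poly by (intro trig_poly.intros)
  moreover have "g = (\<lambda>t. (1 / 2 * D t + K) / D t)"
    using D_ne_0 by (auto intro!: ext simp: g_def field_simps)
  ultimately show ?thesis
    using D_trig_poly D_ne_0 by (simp add: smooth_real_trig_poly_fraction)
qed

lemma smooth_x: "smooth_real x"
  using x_has_derivative smooth_g by (rule smooth_real_if_deriv_smooth)

lemma g_has_derivative: "(g has_real_derivative deriv g t) (at t)"
proof -
  have "(deriv ^^ 0) g differentiable (at t)"
    using smooth_g unfolding smooth_real_def by blast
  then show ?thesis
    by (simp add: DERIV_deriv_iff_real_differentiable)
qed

lemma conserved_quotient:
  assumes "M t \<noteq> 0"
  shows "cos (x t) / (1 - deriv x t) = sqrt (D t) / (2 * (1 - b))"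
proof -
  \<comment> \<open>with \<open>\<surd>(D t)\<close> named, \<open>D t = r * r\<close> is a plain field identity for the simplifier\<close>
  define r where "r = sqrt (D t)"
  have "r \<noteq> 0" and D_eq: "D t = r * r"
    using sqrt_D_ne_0[of t] D_pos[of t] by (simp_all add: r_def)
  show ?thesis
    unfolding deriv_x one_minus_g cos_x r_def[symmetric] D_eq
    using assms \<open>r \<noteq> 0\<close> b_ne_1 by (simp add: field_simps)
qed

lemma ode_divergence_form:
  assumes "M t \<noteq> 0"
  shows "((\<lambda>s. cos (x s) / (1 - deriv x s)) has_real_derivative - sin (x t)) (at t)"
proof -
  have "(- 2 * (1 - b) * N t / D t) * sqrt (D t) / (2 * (1 - b)) = - sin (x t)"
  proof -
    define r where "r = sqrt (D t)"
    have "r \<noteq> 0" and D_eq: "D t = r * r"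
      using sqrt_D_ne_0[of t] D_pos[of t] by (simp_all add: r_def)
    show ?thesis
      unfolding sin_x r_def[symmetric] D_eq using \<open>r \<noteq> 0\<close> b_ne_1 by (simp add: field_simps)
  qed
  with DERIV_cdivide[OF sqrt_D_has_derivative[of t], of "2 * (1 - b)"]
  have "((\<lambda>s. sqrt (D s) / (2 * (1 - b))) has_real_derivative - sin (x t)) (at t)"
    by simp
  moreover have "continuous_on UNIV M"
    using M_has_derivative by (meson DERIV_isCont continuous_at_imp_continuous_on)
  then have "open {s. M s \<noteq> 0}"
    by (intro open_Collect_neq continuous_on_const)
  ultimately show ?thesis
    by (rule has_field_derivative_transform_within_open) (use assms conserved_quotient in simp_all)
qed

lemma ode_expanded:
  assumes "M t \<noteq> 0"
  shows "cos (x t) / (1 - deriv x t)\<^sup>2 * deriv (deriv x) t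
    - sin (x t) / (1 - deriv x t) * deriv x t = - sin (x t)"
proof -
  have "1 - g t \<noteq> 0" using assms g_eq_1_iff[of t] by simp
  have "((\<lambda>s. cos (x s) / (1 - deriv x s)) has_real_derivative
      (- sin (x t) * g t * (1 - g t) - cos (x t) * (0 - deriv g t)) / ((1 - g t) * (1 - g t))) (at t)"
    unfolding deriv_x using \<open>1 - g t \<noteq> 0\<close>
    by (auto intro!: derivative_eq_intros x_has_derivative g_has_derivative)
  from this ode_divergence_form[OF assms]
  have quotient_rule: "(- sin (x t) * g t * (1 - g t) - cos (x t) * (0 - deriv g t))
      / ((1 - g t) * (1 - g t)) = - sin (x t)"
    by (rule DERIV_unique)
  have "cos (x t) / w\<^sup>2 * deriv g t - sin (x t) / w * g t
      = (- sin (x t) * g t * w - cos (x t) * (0 - deriv g t)) / (w * w)" if "w \<noteq> 0" for w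
    using that by (simp add: field_simps power2_eq_square)
  from this[OF \<open>1 - g t \<noteq> 0\<close>] quotient_rule show ?thesis
    unfolding deriv_x by (rule trans)
qed

lemma energy_x:
  assumes "M t \<noteq> 0"
  shows "energy x t = c"
proof -
  define r where "r = sqrt (D t)"
  have "r \<noteq> 0" and D_eq: "D t = r * r"
    using sqrt_D_ne_0[of t] D_pos[of t] by (simp_all add: r_def)
  have "2 * g t - 1 = 2 * K / D t"
    using D_ne_0[of t] by (simp add: g_def field_simps)
  then have "energy x t = (cos (x t))\<^sup>2 * (2 * K / D t) / (1 - g t)\<^sup>2"
    by (simp add: energy_def deriv_x)
  also have "\<dots> = c"
  proof -
    define u where "u = 1 - b"
    have "u \<noteq> 0" using b_ne_1 by (simp add: u_def)
    then show ?thesis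
      unfolding one_minus_g cos_x c_eq r_def[symmetric] D_eq u_def[symmetric]
      using assms \<open>r \<noteq> 0\<close> by (simp add: field_simps power2_eq_square)
  qed
  finally show ?thesis .
qed

subsection \<open>The periodic case \<open>b < 1/2\<close>\<close>

lemma K_neg_iff: "K < 0 \<longleftrightarrow> b < 1 / 2"
  using cos_a_pos by (auto simp: K_def mult_less_0_iff)

lemma c_neg_iff: "c < 0 \<longleftrightarrow> b < 1 / 2"
proof -
  have "c < 0 \<longleftrightarrow> K < 0"
    using b_ne_1 by (simp add: c_eq divide_less_0_iff)
  then show ?thesis using K_neg_iff by simp
qed

lemma g_lt_half: "b < 1 / 2 \<Longrightarrow> g t < 1 / 2"
  using K_neg_iff D_pos[of t] by (simp add: g_def divide_neg_pos)

lemma g_gt_half: "b > 1 / 2 \<Longrightarrow> g t > 1 / 2"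
  using K_neg_iff K_ne_0 D_pos[of t] by (simp add: g_def)

lemma M_pos:
  assumes "b < 1 / 2"
  shows "M t > 0"
proof (rule ccontr)
  assume "\<not> M t > 0"
  then have "2 * (1 - b) \<le> - E t" by (simp add: M_def)
  then have "(2 * (1 - b))\<^sup>2 \<le> (- E t)\<^sup>2"
    using assms by (intro power_mono) simp_all
  then have "4 * (1 - b)\<^sup>2 \<le> (E t)\<^sup>2"
    by (simp add: power2_eq_square algebra_simps)
  moreover have "(E t)\<^sup>2 \<le> A\<^sup>2 + B\<^sup>2"
    using E_N_sum_sq[of t] by (metis le_add_same_cancel1 zero_le_power2)
  moreover have "A\<^sup>2 + B\<^sup>2 < 4 * (1 - b)\<^sup>2"
    using A_B_sum_sq K_neg_iff assms by simp
  ultimately show False by linarith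
qed

lemma x_bounds:
  assumes "b < 1 / 2"
  shows "- (pi / 2) < x t" and "x t < pi / 2"
proof -
  have x_ne: "x s \<noteq> pi / 2" "- x s \<noteq> pi / 2" for s
  proof -
    have "cos (x s) \<noteq> 0"
      using M_pos[OF assms, of s] cos_x_eq_0_iff by simp
    then show "x s \<noteq> pi / 2" "- x s \<noteq> pi / 2"
      by (metis cos_pi_half, metis cos_minus cos_pi_half minus_minus)
  qed
  have "x 0 < pi / 2" "- x 0 < pi / 2"
    using a_bound by (auto simp: x_0)
  moreover have "continuous_on UNIV (\<lambda>s. - x s)"
    using continuous_x by (intro continuous_intros)
  ultimately have "x t < pi / 2" "- x t < pi / 2"
    using continuous_avoiding_value_stays_below[OF continuous_x x_ne(1)]
      continuous_avoiding_value_stays_below[of "\<lambda>s. - x s", OF _ x_ne(2)]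
    by blast+
  then show "- (pi / 2) < x t" "x t < pi / 2" by simp_all
qed

lemma x_eq_arctan:
  assumes "b < 1 / 2"
  shows "x t = arctan (N t / M t)"
proof -
  have "x t = arctan (tan (x t))"
    using arctan_tan[OF x_bounds(1)[OF assms] x_bounds(2)[OF assms]] by simp
  also have "tan (x t) = N t / M t"
    using M_pos[OF assms, of t] by (intro tan_x) simp
  finally show ?thesis .
qed

lemma periodic_x_iff: "periodic_real x \<longleftrightarrow> b < 1 / 2"
proof
  assume "b < 1 / 2"
  then have "x (t + 2 * pi) = x t" for t
    by (simp add: x_eq_arctan N_def M_def E_def)
  then show "periodic_real x"
    unfolding periodic_real_def by (intro exI[of _ "2 * pi"]) simp
next
  assume "periodic_real x"
  then obtain T where "T > 0" and "x (0 + T) = x 0"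
    unfolding periodic_real_def by blast
  show "b < 1 / 2"
  proof (rule ccontr)
    assume "\<not> b < 1 / 2"
    then have "b > 1 / 2" using b_ne_half by simp
    have "x 0 < x T"
      using \<open>T > 0\<close>
    proof (rule DERIV_pos_imp_increasing)
      show "\<exists>y. (x has_real_derivative y) (at s) \<and> y > 0" for s
        using x_has_derivative g_gt_half[OF \<open>b > 1 / 2\<close>, of s] by force
    qed
    with \<open>x (0 + T) = x 0\<close> show False by simp
  qed
qed

definition "energy_level =
  {(p, q). \<bar>p\<bar> < pi / 2 \<and> q < 1 / 2 \<and> (cos p)\<^sup>2 * (2 * q - 1) = c * (1 - q)\<^sup>2}"

lemma phase_orbit_subset_energy_level:
  assumes "b < 1 / 2"
  shows "phase_orbit x \<subseteq> energy_level"
proof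
  fix z assume "z \<in> phase_orbit x"
  then obtain t where z: "z = (x t, g t)"
    unfolding phase_orbit_def deriv_x by blast
  have "g t < 1 / 2" using g_lt_half[OF assms] .
  moreover have "(cos (x t))\<^sup>2 * (2 * g t - 1) / (1 - g t)\<^sup>2 = c"
    using energy_x[of t] M_pos[OF assms, of t] by (simp add: energy_def deriv_x)
  ultimately have "(cos (x t))\<^sup>2 * (2 * g t - 1) = c * (1 - g t)\<^sup>2"
    by (simp add: field_simps)
  moreover have "\<bar>x t\<bar> < pi / 2"
    using x_bounds[OF assms, of t] by (simp add: abs_less_iff)
  ultimately show "z \<in> energy_level"
    unfolding energy_level_def z using \<open>g t < 1 / 2\<close> by simp
qed

text \<open>The witness is the point \<open>(M\<^sub>0, M\<^sub>0 tan p)\<close> with \<open>M\<^sub>0 = D\<^sub>0 (1 - q) / (2 (1 - b))\<close> and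
  \<open>D\<^sub>0 = 2 K / (2 q - 1)\<close>; the energy relation is exactly what puts it on the circle traced
  by \<open>(M, N)\<close>.\<close>

lemma energy_level_point_attained:
  assumes "b < 1 / 2" and "(p, q) \<in> energy_level"
  shows "\<exists>t. N t = M t * tan p \<and> D t = 2 * K / (2 * q - 1)"
proof -
  have p: "\<bar>p\<bar> < pi / 2" and "q < 1 / 2"
    and level: "(cos p)\<^sup>2 * (2 * q - 1) = c * (1 - q)\<^sup>2"
    using assms(2) by (auto simp: energy_level_def)
  define u where "u = 1 - b"
  define v where "v = 2 * q - 1"
  define w where "w = 1 - q"
  define D\<^sub>0 where "D\<^sub>0 = 2 * K / v"
  define M\<^sub>0 where "M\<^sub>0 = D\<^sub>0 * w / (2 * u)"
  define N\<^sub>0 where "N\<^sub>0 = M\<^sub>0 * tan p"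
  have "u > 0" "K < 0" "v < 0" "w > 0"
    using assms(1) K_neg_iff \<open>q < 1 / 2\<close> by (simp_all add: u_def v_def w_def)
  have "cos p > 0" using p by (intro cos_gt_zero_pi) (auto simp: abs_less_iff)
  have "M\<^sub>0\<^sup>2 + N\<^sub>0\<^sup>2 = M\<^sub>0\<^sup>2 * (1 + (tan p)\<^sup>2)"
    unfolding N\<^sub>0_def by (simp add: power_mult_distrib distrib_left)
  also have "\<dots> = M\<^sub>0\<^sup>2 * (inverse (cos p))\<^sup>2"
    using tan_sec[of p] \<open>cos p > 0\<close> by simp
  also have "\<dots> = D\<^sub>0"
  proof -
    have "(cos p)\<^sup>2 * v = K / (2 * u\<^sup>2) * w\<^sup>2"
      using level unfolding c_eq u_def[symmetric] v_def w_def .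
    then have cos_p: "(cos p)\<^sup>2 = K * w\<^sup>2 / (2 * u\<^sup>2 * v)"
      using \<open>u > 0\<close> \<open>v < 0\<close> by (simp add: field_simps)
    show ?thesis
      unfolding M\<^sub>0_def D\<^sub>0_def power_inverse cos_p using \<open>u > 0\<close> \<open>K < 0\<close> \<open>v < 0\<close> \<open>w > 0\<close>
      by (simp add: field_simps power2_eq_square)
  qed
  finally have M\<^sub>0_N\<^sub>0: "M\<^sub>0\<^sup>2 + N\<^sub>0\<^sup>2 = D\<^sub>0" .
  have "(M\<^sub>0 - 2 * u)\<^sup>2 + N\<^sub>0\<^sup>2 = D\<^sub>0 * (1 - 2 * w) + 4 * u\<^sup>2"
    using M\<^sub>0_N\<^sub>0 \<open>u > 0\<close> unfolding M\<^sub>0_def by (simp add: field_simps power2_eq_square)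
  also have "\<dots> = A\<^sup>2 + B\<^sup>2"
    using \<open>v < 0\<close> A_B_sum_sq unfolding D\<^sub>0_def u_def by (simp add: v_def w_def)
  finally obtain t where E_t: "E t = M\<^sub>0 - 2 * u" and N_t: "N t = N\<^sub>0"
    using sinusoid_pair_surj[OF A_B_sum_sq_pos] unfolding E_def N_def by blast
  have M_t: "M t = M\<^sub>0" by (simp add: M_def E_t u_def)
  have "D t = D\<^sub>0" by (simp add: D_def M_t N_t M\<^sub>0_N\<^sub>0)
  then show ?thesis
    using M_t N_t by (auto simp: N\<^sub>0_def D\<^sub>0_def v_def)
qed

lemma energy_level_subset_phase_orbit:
  assumes "b < 1 / 2"
  shows "energy_level \<subseteq> phase_orbit x"
proof clarify
  fix p q assume pq: "(p, q) \<in> energy_level"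
  then have p: "\<bar>p\<bar> < pi / 2" and "q < 1 / 2"
    by (auto simp: energy_level_def)
  obtain t where N_t: "N t = M t * tan p" and D_t: "D t = 2 * K / (2 * q - 1)"
    using energy_level_point_attained[OF assms pq] by blast
  have "x t = arctan (tan p)"
    using x_eq_arctan[OF assms, of t] M_pos[OF assms, of t] by (simp add: N_t)
  also have "\<dots> = p"
    using p by (intro arctan_tan) (auto simp: abs_less_iff)
  finally have "x t = p" .
  moreover have "g t = q"
    using K_neg_iff assms \<open>q < 1 / 2\<close> by (simp add: g_def D_t field_simps)
  ultimately show "(p, q) \<in> phase_orbit x"
    unfolding phase_orbit_def deriv_x by (auto intro!: image_eqI[of _ _ t])
qed

lemma phase_orbit_eq_energy_level: "b < 1 / 2 \<Longrightarrow> phase_orbit x = energy_level"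
  using phase_orbit_subset_energy_level energy_level_subset_phase_orbit by blast

lemma c_gt_minus_1: "c > - 1"
proof -
  have "1 + c > 0"
    unfolding one_plus_c using A_B_sum_sq_pos b_ne_1 by simp
  then show ?thesis by simp
qed

definition "energy_sublevel =
  {(p, q). \<bar>p\<bar> < pi / 2 \<and> (cos p)\<^sup>2 * (2 * q - 1) < c * (1 - q)\<^sup>2}"

lemma open_energy_sublevel: "open energy_sublevel"
proof -
  have "energy_sublevel = {z. \<bar>fst z\<bar> < pi / 2}
      \<inter> {z. (cos (fst z))\<^sup>2 * (2 * snd z - 1) < c * (1 - snd z)\<^sup>2}"
    by (auto simp: energy_sublevel_def)
  then show ?thesis
    by (simp only:) (intro open_Int open_Collect_less continuous_intros)
qed

lemma energy_sublevel_below_half: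
  assumes "b < 1 / 2" and "(p, q) \<in> energy_sublevel"
  shows "q < 1 / 2"
proof (rule ccontr)
  assume "\<not> q < 1 / 2"
  then have "0 \<le> (cos p)\<^sup>2 * (2 * q - 1)" by simp
  moreover have "c * (1 - q)\<^sup>2 \<le> 0"
    using c_neg_iff assms(1) by (simp add: mult_nonpos_nonneg)
  ultimately show False
    using assms(2) by (simp add: energy_sublevel_def)
qed

lemma bounded_energy_sublevel:
  assumes "b < 1 / 2"
  shows "bounded energy_sublevel"
proof -
  have "c < 0" using c_neg_iff assms by simp
  have "energy_sublevel \<subseteq> {- (pi / 2)..pi / 2} \<times> {1 + 2 / c..1 / 2}"
  proof
    fix z assume "z \<in> energy_sublevel"
    then obtain p q where z: "z = (p, q)" and pq: "(p, q) \<in> energy_sublevel"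
      by (cases z) simp
    have "q < 1 / 2"
      using energy_sublevel_below_half[OF assms pq] .
    have p: "\<bar>p\<bar> < pi / 2" and below: "(cos p)\<^sup>2 * (2 * q - 1) < c * (1 - q)\<^sup>2"
      using pq by (simp_all add: energy_sublevel_def)
    have "(cos p)\<^sup>2 \<le> 1"
      by (simp add: abs_square_le_1)
    then have "2 * q - 1 \<le> (cos p)\<^sup>2 * (2 * q - 1)"
      using mult_right_mono_neg[of "(cos p)\<^sup>2" 1 "2 * q - 1"] \<open>q < 1 / 2\<close> by simp
    with below have "2 * q - 1 < c * (1 - q)\<^sup>2" by linarith
    then have "- 2 * (1 - q) < c * (1 - q) * (1 - q)"
      by (simp add: power2_eq_square algebra_simps)
    then have "c * (1 - q) > - 2"
      using mult_less_cancel_right_pos[of "1 - q" "- 2" "c * (1 - q)"] \<open>q < 1 / 2\<close> by simp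
    then have "1 - q < - 2 / c"
      using neg_less_divide_eq[OF \<open>c < 0\<close>, of "1 - q" "- 2"] by (simp add: mult.commute)
    then have "1 + 2 / c \<le> q" by simp
    then show "z \<in> {- (pi / 2)..pi / 2} \<times> {1 + 2 / c..1 / 2}"
      using abs_less_iff[THEN iffD1, OF p] \<open>q < 1 / 2\<close> by (simp add: z)
  qed
  moreover have "bounded ({- (pi / 2)..pi / 2} \<times> {1 + 2 / c..1 / 2})"
    by (intro bounded_Times bounded_closed_interval)
  ultimately show ?thesis
    by (rule bounded_subset[rotated])
qed

lemma closure_energy_sublevel:
  assumes "b < 1 / 2"
  shows "closure energy_sublevel \<subseteq>
    {(p, q). \<bar>p\<bar> \<le> pi / 2 \<and> q \<le> 1 / 2 \<and> (cos p)\<^sup>2 * (2 * q - 1) \<le> c * (1 - q)\<^sup>2}"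
    (is "_ \<subseteq> ?V")
proof (rule closure_minimal)
  show "energy_sublevel \<subseteq> ?V"
    using energy_sublevel_below_half[OF assms] by (fastforce simp: energy_sublevel_def)
  have "?V = {z. \<bar>fst z\<bar> \<le> pi / 2} \<inter> {z. snd z \<le> 1 / 2}
      \<inter> {z. (cos (fst z))\<^sup>2 * (2 * snd z - 1) \<le> c * (1 - snd z)\<^sup>2}"
    by auto
  then show "closed ?V"
    by (simp only:) (intro closed_Int closed_Collect_le continuous_intros)
qed

lemma frontier_energy_sublevel:
  assumes "b < 1 / 2"
  shows "frontier energy_sublevel \<subseteq> energy_level"
proof clarify
  fix p q assume pq: "(p, q) \<in> frontier energy_sublevel"
  then have "(p, q) \<in> closure energy_sublevel" and "(p, q) \<notin> energy_sublevel"
    using open_energy_sublevel by (auto simp: frontier_def interior_open)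
  then have p: "\<bar>p\<bar> \<le> pi / 2" and "q \<le> 1 / 2"
    and below: "(cos p)\<^sup>2 * (2 * q - 1) \<le> c * (1 - q)\<^sup>2"
    and not_below: "\<bar>p\<bar> < pi / 2 \<Longrightarrow> (cos p)\<^sup>2 * (2 * q - 1) \<ge> c * (1 - q)\<^sup>2"
    using closure_energy_sublevel[OF assms] by (auto simp: energy_sublevel_def)
  have "c * (1 - q)\<^sup>2 < 0"
    using c_neg_iff assms \<open>q \<le> 1 / 2\<close> by (simp add: mult_neg_pos)
  have "\<bar>p\<bar> < pi / 2"
  proof (rule ccontr)
    assume "\<not> \<bar>p\<bar> < pi / 2"
    then have "p = pi / 2 \<or> p = - (pi / 2)" using p by (cases "p < 0") auto
    then have "cos p = 0" by (metis cos_minus cos_pi_half)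
    with below \<open>c * (1 - q)\<^sup>2 < 0\<close> show False by simp
  qed
  moreover have level: "(cos p)\<^sup>2 * (2 * q - 1) = c * (1 - q)\<^sup>2"
    using below not_below[OF \<open>\<bar>p\<bar> < pi / 2\<close>] by simp
  moreover have "q \<noteq> 1 / 2"
  proof
    assume "q = 1 / 2"
    then have "2 * q - 1 = 0" by simp
    with level \<open>c * (1 - q)\<^sup>2 < 0\<close> show False by simp
  qed
  ultimately show "(p, q) \<in> energy_level"
    using \<open>q \<le> 1 / 2\<close> by (simp add: energy_level_def)
qed

lemma origin_inside_phase_orbit:
  assumes "b < 1 / 2"
  shows "(0, 0) \<in> inside (phase_orbit x)"
proof -
  have origin_off: "(0, 0) \<notin> energy_level"
    using c_gt_minus_1 by (simp add: energy_level_def)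
  have origin_in: "(0, 0) \<in> energy_sublevel"
    using c_gt_minus_1 by (simp add: energy_sublevel_def)
  define C where "C = connected_component_set (- energy_level) (0, 0)"
  have "C \<subseteq> energy_sublevel"
  proof (rule ccontr)
    assume not_sub: "\<not> C \<subseteq> energy_sublevel"
    have "connected C" by (simp add: C_def)
    moreover have "(0, 0) \<in> C"
      using origin_off by (simp add: C_def connected_component_refl_eq)
    then have "C \<inter> energy_sublevel \<noteq> {}"
      using origin_in by blast
    moreover have "C - energy_sublevel \<noteq> {}"
      using not_sub by blast
    ultimately have "C \<inter> frontier energy_sublevel \<noteq> {}"
      by (rule connected_Int_frontier)
    moreover have "C \<subseteq> - energy_level"
      unfolding C_def by (rule connected_component_subset)
    ultimately show False
      using frontier_energy_sublevel[OF assms] by blast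
  qed
  then have "bounded C"
    using bounded_energy_sublevel[OF assms] bounded_subset by blast
  with origin_off show ?thesis
    by (simp add: inside_def C_def phase_orbit_eq_energy_level[OF assms])
qed

lemma phase_orbit_symmetric:
  "b < 1 / 2 \<Longrightarrow> (p, q) \<in> phase_orbit x \<Longrightarrow> (- p, q) \<in> phase_orbit x"
  by (simp add: phase_orbit_eq_energy_level energy_level_def)

subsection \<open>The case \<open>b > 1/2\<close>\<close>

lemma M_eq_0_iff: "M t = 0 \<longleftrightarrow> B * cos t - A * sin t = 2 * (b - 1)"
  by (auto simp: M_def E_def)

lemma N_ne_0_if_M_eq_0: "M t = 0 \<Longrightarrow> N t \<noteq> 0"
  using D_pos[of t] by (auto simp: D_def)

lemma x_at_zero_of_M:
  assumes "M t = 0"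
  shows "\<exists>k :: int. x t = (2 * of_int k + 1) * pi / 2"
proof -
  obtain i :: int where "odd i" and "x t = of_int i * (pi / 2)"
    using cos_x_eq_0_iff[of t] assms by (auto simp: cos_zero_iff_int)
  then obtain k where "i = 2 * k + 1" by (auto elim: oddE)
  with \<open>x t = of_int i * (pi / 2)\<close> show ?thesis by auto
qed

lemma eventually_M_ne_0: "M t = 0 \<Longrightarrow> eventually (\<lambda>s. M s \<noteq> 0) (at t)"
  using N_ne_0_if_M_eq_0 by (intro eventually_nonzero_near_simple_zero[OF M_has_derivative]) simp_all

lemma ode_residual_tendsto:
  assumes "M t = 0"
  shows "(ode_residual x \<longlongrightarrow> 0) (at t)"
proof (rule tendsto_eventually)
  from eventually_M_ne_0[OF assms] show "\<forall>\<^sub>F s in at t. ode_residual x s = 0"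
  proof eventually_elim
    case (elim s)
    then show ?case using ode_expanded[of s] by (simp add: ode_residual_def)
  qed
qed

lemma energy_tendsto:
  assumes "M t = 0"
  shows "(energy x \<longlongrightarrow> c) (at t)"
proof (rule tendsto_eventually)
  from eventually_M_ne_0[OF assms] show "\<forall>\<^sub>F s in at t. energy x s = c"
    by eventually_elim (rule energy_x)
qed

lemma deriv_x_crosses_1:
  assumes "M t = 0"
  shows "\<exists>\<epsilon>>0. \<forall>s\<in>{t - \<epsilon><..<t}. \<forall>u\<in>{t<..<t + \<epsilon>}. (deriv x s - 1) * (deriv x u - 1) < 0"
proof -
  obtain \<epsilon> where "\<epsilon> > 0" and change: "\<forall>s\<in>{t - \<epsilon><..<t}. \<forall>u\<in>{t<..<t + \<epsilon>}. M s * M u < 0"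
    using sign_change_at_simple_zero[OF M_has_derivative _ assms] N_ne_0_if_M_eq_0[OF assms] by auto
  have "(deriv x s - 1) * (deriv x u - 1) = (1 - g s) * (1 - g u)" for s u
    by (simp add: deriv_x algebra_simps)
  also have "(1 - g s) * (1 - g u) = 4 * (1 - b)\<^sup>2 / (D s * D u) * (M s * M u)" for s u
    unfolding one_minus_g using D_ne_0[of s] D_ne_0[of u] by (simp add: field_simps power2_eq_square)
  moreover have "4 * (1 - b)\<^sup>2 / (D s * D u) > 0" for s u
    using b_ne_1 D_pos[of s] D_pos[of u] by simp
  ultimately show ?thesis
    using \<open>\<epsilon> > 0\<close> change by (metis mult_pos_neg)
qed

lemma deriv_x_bounds:
  assumes "b > 1 / 2"
  shows "sqrt (1 + c) / (sqrt (1 + c) + 1) \<le> deriv x t \<and> deriv x t \<le> sqrt (1 + c) / (sqrt (1 + c) - 1)"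
proof -
  define R where "R = sqrt (A\<^sup>2 + B\<^sup>2)"
  define s where "s = 2 * \<bar>1 - b\<bar>"
  have "s > 0" using b_ne_1 by (simp add: s_def)
  have R_sq: "R\<^sup>2 = A\<^sup>2 + B\<^sup>2" by (simp add: R_def)
  have s_sq: "s\<^sup>2 = 4 * (1 - b)\<^sup>2" by (simp add: s_def power_mult_distrib)
  have K_eq: "K = (R\<^sup>2 - s\<^sup>2) / 2" using A_B_sum_sq by (simp add: R_sq s_sq)
  have "K > 0" using K_neg_iff K_ne_0 assms by (simp add: not_less_iff_gr_or_eq)
  then have "s\<^sup>2 < R\<^sup>2" by (simp add: K_eq)
  moreover have "R \<ge> 0" by (simp add: R_def)
  ultimately have "s < R" by (rule power_less_imp_less_base)
  have "sqrt (1 + c) = R / s"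
    using \<open>s > 0\<close> \<open>s < R\<close>
    by (simp add: one_plus_c R_sq[symmetric] s_sq[symmetric] real_sqrt_divide)
  have "\<bar>E t\<bar> \<le> R"
    using E_N_sum_sq[of t] abs_le_square_iff[of "E t" R] R_def
    by (simp add: R_sq) (metis le_add_same_cancel1 zero_le_power2)
  moreover have "\<bar>4 * (1 - b) * E t\<bar> = 2 * s * \<bar>E t\<bar>"
    unfolding s_def abs_mult by simp
  ultimately have "\<bar>4 * (1 - b) * E t\<bar> \<le> 2 * s * R"
    using \<open>s > 0\<close> by simp
  moreover have "D t = R\<^sup>2 + 4 * (1 - b) * E t + s\<^sup>2"
    by (simp add: D_expand R_sq s_sq)
  ultimately have "(R - s)\<^sup>2 \<le> D t" "D t \<le> (R + s)\<^sup>2"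
    by (simp_all add: power2_eq_square algebra_simps abs_le_iff)
  then have "K / (R + s)\<^sup>2 \<le> K / D t" "K / D t \<le> K / (R - s)\<^sup>2"
    using \<open>K > 0\<close> \<open>s < R\<close> D_pos[of t] \<open>s > 0\<close>
    by (auto intro!: divide_left_mono)
  then show ?thesis
    unfolding \<open>sqrt (1 + c) = R / s\<close> deriv_x g_def
    using half_plus_difference_quotients[OF \<open>s > 0\<close> \<open>s < R\<close>] by (simp add: K_eq)
qed

lemma deriv_x_formula:
  "\<forall>t. deriv x t = 1 / 2 + 2 * (2 * b - 1) * (cos a)\<^sup>2 /
     (A\<^sup>2 + B\<^sup>2 + 4 * (1 - b) * (B * cos t - A * sin t) + 4 * (1 - b)\<^sup>2)"
  by (simp add: deriv_x g_def D_expand K_def E_def)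

lemma tan_x_formula:
  "\<forall>t. 2 * (1 - b) + B * cos t - A * sin t \<noteq> 0 \<longrightarrow>
     tan (x t) = (A * cos t + B * sin t) / (2 * (1 - b) + B * cos t - A * sin t)"
  using tan_x by (simp add: M_def E_def N_def add_diff_eq)

lemma solves_ode:
  "\<forall>t. cos (x t) \<noteq> 0 \<and> deriv x t \<noteq> 1 \<longrightarrow>
     ((\<lambda>s. cos (x s) / (1 - deriv x s)) has_real_derivative - sin (x t)) (at t)
   \<and> cos (x t) / (1 - deriv x t)\<^sup>2 * deriv (deriv x) t
       - sin (x t) / (1 - deriv x t) * deriv x t = - sin (x t)"
  using cos_x_eq_0_iff ode_divergence_form ode_expanded by simp

lemma periodic_orbit:
  "b < 1 / 2 \<longrightarrow> (0, 0) \<in> inside (phase_orbit x)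
     \<and> (\<forall>p q. (p, q) \<in> phase_orbit x \<longrightarrow> (- p, q) \<in> phase_orbit x)"
  using origin_inside_phase_orbit phase_orbit_symmetric by simp

lemma crossing_times:
  "b > 1 / 2 \<longrightarrow>
    (\<forall>\<tau> :: int \<Rightarrow> real.
       strict_mono \<tau>
     \<and> range \<tau> = {t. B * cos t - A * sin t = 2 * (b - 1)}
     \<and> \<tau> 0 > 0 \<and> (\<forall>t. B * cos t - A * sin t = 2 * (b - 1) \<and> t > 0 \<longrightarrow> \<tau> 0 \<le> t)
     \<longrightarrow>
       (\<forall>j. (\<exists>k :: int. x (\<tau> j) = (2 * of_int k + 1) * pi / 2) \<and> deriv x (\<tau> j) = 1)
     \<and> (\<forall>j. (ode_residual x \<longlongrightarrow> 0) (at (\<tau> j)) \<and> (energy x \<longlongrightarrow> c) (at (\<tau> j)))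
     \<and> (\<forall>t. sqrt (1 + c) / (sqrt (1 + c) + 1) \<le> deriv x t
             \<and> deriv x t \<le> sqrt (1 + c) / (sqrt (1 + c) - 1))
     \<and> {t. deriv x t = 1} = range \<tau>
     \<and> (\<forall>j. \<exists>\<epsilon>>0. \<forall>s\<in>{\<tau> j - \<epsilon><..<\<tau> j}. \<forall>u\<in>{\<tau> j<..<\<tau> j + \<epsilon>}.
             (deriv x s - 1) * (deriv x u - 1) < 0))"
    (is "_ \<longrightarrow> (\<forall>\<tau>. ?enumeration \<tau> \<longrightarrow> ?crossings \<tau>)")
proof (intro impI allI)
  fix \<tau> :: "int \<Rightarrow> real"
  assume "b > 1 / 2" and "?enumeration \<tau>"
  then have zeros: "range \<tau> = {t. M t = 0}"
    using M_eq_0_iff by auto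
  then have M_\<tau>: "M (\<tau> j) = 0" for j by auto
  have "{t. deriv x t = 1} = range \<tau>"
    unfolding zeros deriv_x using g_eq_1_iff by auto
  then show "?crossings \<tau>"
    using x_at_zero_of_M[OF M_\<tau>] g_eq_1_iff[of "\<tau> _"] M_\<tau> ode_residual_tendsto[OF M_\<tau>]
      energy_tendsto[OF M_\<tau>] deriv_x_bounds[OF \<open>b > 1 / 2\<close>] deriv_x_crosses_1[OF M_\<tau>]
    by (simp add: deriv_x)
qed

end

theorem mainTheorem1:
  fixes a b :: real
  assumes ha: "\<bar>a\<bar> < pi / 2" and hb1: "b \<noteq> 1 / 2" and hb2: "b \<noteq> 1"
    and hab: "\<bar>a\<bar> + \<bar>b\<bar> > 0"
  defines "c \<equiv> (2 * b - 1) * (cos a)^2 / (1 - b)^2"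
    and "A \<equiv> sin (2 * a)"
    and "B \<equiv> 2 * b - 1 + cos (2 * a)"
  shows "\<exists>x :: real \<Rightarrow> real.
     smooth_real x \<and> x 0 = a \<and> deriv x 0 = b
   \<and> (\<forall>t. 2 * (1 - b) + B * cos t - A * sin t \<noteq> 0 \<longrightarrow>
          tan (x t) = (A * cos t + B * sin t) / (2 * (1 - b) + B * cos t - A * sin t))
   \<and> (\<forall>t. deriv x t = 1 / 2 + 2 * (2 * b - 1) * (cos a)^2 /
          (A^2 + B^2 + 4 * (1 - b) * (B * cos t - A * sin t) + 4 * (1 - b)^2))
   \<and> (\<forall>t. cos (x t) \<noteq> 0 \<and> deriv x t \<noteq> 1 \<longrightarrow>
          ((\<lambda>s. cos (x s) / (1 - deriv x s)) has_real_derivative - sin (x t)) (at t)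
        \<and> cos (x t) / (1 - deriv x t)^2 * deriv (deriv x) t
            - sin (x t) / (1 - deriv x t) * deriv x t = - sin (x t))
   \<and> (periodic_real x \<longleftrightarrow> b < 1 / 2)
   \<and> (b < 1 / 2 \<longrightarrow>
        (0, 0) \<in> inside (phase_orbit x)
      \<and> (\<forall>p q. (p, q) \<in> phase_orbit x \<longrightarrow> (- p, q) \<in> phase_orbit x))
   \<and> (b > 1 / 2 \<longrightarrow>
        (\<forall>\<tau> :: int \<Rightarrow> real.
           strict_mono \<tau>
         \<and> range \<tau> = {t. B * cos t - A * sin t = 2 * (b - 1)}
         \<and> \<tau> 0 > 0 \<and> (\<forall>t. B * cos t - A * sin t = 2 * (b - 1) \<and> t > 0 \<longrightarrow> \<tau> 0 \<le> t)
         \<longrightarrow>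
           (\<forall>j. (\<exists>k :: int. x (\<tau> j) = (2 * of_int k + 1) * pi / 2) \<and> deriv x (\<tau> j) = 1)
         \<and> (\<forall>j. (ode_residual x \<longlongrightarrow> 0) (at (\<tau> j))
                 \<and> (energy x \<longlongrightarrow> c) (at (\<tau> j)))
         \<and> (\<forall>t. sqrt (1 + c) / (sqrt (1 + c) + 1) \<le> deriv x t
                 \<and> deriv x t \<le> sqrt (1 + c) / (sqrt (1 + c) - 1))
         \<and> {t. deriv x t = 1} = range \<tau>
         \<and> (\<forall>j. \<exists>\<epsilon>>0. \<forall>s\<in>{\<tau> j - \<epsilon><..<\<tau> j}. \<forall>u\<in>{\<tau> j<..<\<tau> j + \<epsilon>}.
                 (deriv x s - 1) * (deriv x u - 1) < 0)))"
proof -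
  interpret S: explicit_solution a b
    using ha hb1 hb2 hab by unfold_locales
  have defs: "A = S.A" "B = S.B" "c = S.c"
    by (simp_all add: A_def B_def c_def S.A_def S.B_def S.c_def)
  have deriv_0: "deriv S.x 0 = b"
    by (simp add: S.deriv_x S.g_0)
  show ?thesis
    unfolding defs
    by (intro exI[of _ S.x] conjI S.smooth_x S.x_0 deriv_0 S.tan_x_formula S.deriv_x_formula
        S.solves_ode S.periodic_x_iff S.periodic_orbit S.crossing_times)
qed

end
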